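(* In the setting described in the context, the elements $$\overline{w\,g(i,\varepsilon,\sigma)},$$ where $q_i\varepsilon\sigma\to q_jT_\alpha T_\beta$ ranges over the commands of $M$ (so $1\le i\le n$, $\varepsilon,\sigma\in\{0,1\}$) and $w$ ranges over $V_{\varepsilon\sigma}$, are linearly independent over $\Phi$.
   Context: $\Phi$ is a commutative ring with unity $1\ne0$, regarded as a differential ring with the commuting derivations $\delta_1,\delta_2$ acting as zero. $M$ is a two-tape acyclic Minsky machine with states $q_0,\ldots,q_n$ ($q_0$ terminal). Minsky machine conventions: two tapes infinite to the right with cells $0,1,2,\ldots$; cell $0$ contains $1$, all others $0$; a configuration $[i,a,b]$ means state $q_i$, head at cell $a$ of tape 1 and cell $b$ of tape 2. Commands are $q_i\varepsilon\sigma\to q_jT_\alpha T_\beta$ with $1\le i\le n$, $0\le j\le n$, $\varepsilon,\sigma\in\{0,1\}$, $\alpha,\beta\in\{-1,0,1\}$, $\alpha\ge0$ if $\varepsilon=1$, $\beta\ge0$ if $\sigma=1$, at most one per triple $(i,\varepsilon,\sigma)$; such a command applies to $[i,a,b]$ when ($\varepsilon=1$ iff $a=0$) and ($\sigma=1$ iff $b=0$), producing $[j,a+\alpha,b+\beta]$. Acyclic means no configuration recurs after a positive number of steps. $A=\Phi\{x_1,x_2,q_0,\ldots,q_n\}$ is the differential polynomial ring w.r.t. $\delta_1,\delta_2$. $J$ is the differential ideal generated by $\delta_1(x_2),\delta_2(x_1)$, and $B=A/J$; $B$ is the polynomial ring over $\Phi$ in the variables $\delta_1^i(x_1)$, $\delta_2^i(x_2)$,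 $\delta_1^i\delta_2^j(q_k)$ ($i,j\ge0$), with induced derivations ($\delta_2\delta_1^i(x_1)=0$, $\delta_1\delta_2^i(x_2)=0$). For each command, $g(i,\varepsilon,\sigma)$ is the image in $B$ of $x_1^{\varepsilon}x_2^{\sigma}\delta_1^{1-\varepsilon}\delta_2^{1-\sigma}(q_i)-x_1^{\varepsilon}x_2^{\sigma}\delta_1^{1-\varepsilon+\alpha}\delta_2^{1-\sigma+\beta}(q_j)$. $B^e$ is the ring which is the free left $B$-module on the basis $\{\delta_1^i\delta_2^j\}$ with $\delta_l$ commuting and $\delta_l b=b\delta_l+\delta_l(b)$; $B$ is a left $B^e$-module. $V_{\varepsilon\sigma}$ is the set of elements $(\delta_1^a(x_1))^{1-\varepsilon}(\delta_2^b(x_2))^{1-\sigma}\delta_1^s\delta_2^t\in B^e$ with $a,b,s,t\ge0$. Polynomial degree functions on $B$: $\deg_1(\delta_1^i(x_1))=i+1$, $\deg_1=0$ on other variables; $\deg_2(\delta_2^j(x_2))=j+1$, $\deg_2=0$ on other variables. For a monomial $v$, $\mathrm{Deg}(v)=(\deg_1 v,\deg_2 v)\in\mathbb{N}^2$ ordered lexicographically; for $h\in B$, $\overline{h}$ is the sum of the terms of $h$ of maximal $\mathrm{Deg}$. *)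

theory Defs
  imports Main "HOL-Library.Poly_Mapping" "HOL-Library.Product_Lexorder"
begin

text \<open>Variables of B: X1 i = delta1^i(x1), X2 i = delta2^i(x2),
  Q k i j = delta1^i delta2^j (q_k).\<close>
datatype var = X1 nat | X2 nat | Q nat nat nat

type_synonym 'a B = "(var \<Rightarrow>\<^sub>0 nat) \<Rightarrow>\<^sub>0 'a"

definition Bvar :: "var \<Rightarrow> 'a::comm_ring_1 B" where
  "Bvar v = Poly_Mapping.single (Poly_Mapping.single v 1) 1"

definition smul :: "'a::comm_ring_1 \<Rightarrow> 'a B \<Rightarrow> 'a B" where
  "smul c p = Poly_Mapping.map (\<lambda>x. c * x) p"

text \<open>The unique derivation of B (over the coefficient ring) sending each variable v to D v.\<close>
definition der :: "(var \<Rightarrow> 'a::comm_ring_1 B) \<Rightarrow> 'a B \<Rightarrow> 'a B" where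
  "der D p = (\<Sum>m\<in>Poly_Mapping.keys p. \<Sum>v\<in>Poly_Mapping.keys (m :: var \<Rightarrow>\<^sub>0 nat).
      Poly_Mapping.single (m - Poly_Mapping.single v 1) (Poly_Mapping.lookup p m * of_nat (Poly_Mapping.lookup m v)) * D v)"

fun d1var :: "var \<Rightarrow> 'a::comm_ring_1 B" where
  "d1var (X1 i) = Bvar (X1 (Suc i))"
| "d1var (X2 i) = 0"
| "d1var (Q k i j) = Bvar (Q k (Suc i) j)"

fun d2var :: "var \<Rightarrow> 'a::comm_ring_1 B" where
  "d2var (X1 i) = 0"
| "d2var (X2 i) = Bvar (X2 (Suc i))"
| "d2var (Q k i j) = Bvar (Q k i (Suc j))"

definition delta1 :: "'a::comm_ring_1 B \<Rightarrow> 'a B" where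
  "delta1 = der d1var"

definition delta2 :: "'a::comm_ring_1 B \<Rightarrow> 'a B" where
  "delta2 = der d2var"

text \<open>A two-tape Minsky machine with states q_0..q_n is given by n and a partial
  function cmd: cmd i e s = Some (j, alpha, beta) encodes the command
  q_i e s -> q_j T_alpha T_beta (at most one per triple automatically).\<close>
definition minsky_wf :: "nat \<Rightarrow> (nat \<Rightarrow> nat \<Rightarrow> nat \<Rightarrow> (nat \<times> int \<times> int) option) \<Rightarrow> bool" where
  "minsky_wf n cmd \<longleftrightarrow> (\<forall>i e s j al be. cmd i e s = Some (j, al, be) \<longrightarrow>
      1 \<le> i \<and> i \<le> n \<and> e \<le> 1 \<and> s \<le> 1 \<and> j \<le> n \<and>
      al \<in> {-1, 0, 1} \<and> be \<in> {-1, 0, 1} \<and>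
      (e = 1 \<longrightarrow> al \<ge> 0) \<and> (s = 1 \<longrightarrow> be \<ge> 0))"

text \<open>One step on configurations (state, head position tape 1, head position tape 2).\<close>
definition minsky_step :: "(nat \<Rightarrow> nat \<Rightarrow> nat \<Rightarrow> (nat \<times> int \<times> int) option) \<Rightarrow> ((nat \<times> nat \<times> nat) \<times> (nat \<times> nat \<times> nat)) set" where
  "minsky_step cmd = {((i, a, b), (j, a', b')). \<exists>al be.
      cmd i (if a = 0 then 1 else 0) (if b = 0 then 1 else 0) = Some (j, al, be) \<and>
      int a' = int a + al \<and> int b' = int b + be}"

definition minsky_acyclic :: "(nat \<Rightarrow> nat \<Rightarrow> nat \<Rightarrow> (nat \<times> int \<times> int) option) \<Rightarrow> bool" where
  "minsky_acyclic cmd \<longleftrightarrow> (\<forall>c. (c, c) \<notin> (minsky_step cmd)\<^sup>+)"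

definition gcmd :: "nat \<Rightarrow> nat \<Rightarrow> nat \<Rightarrow> nat \<Rightarrow> int \<Rightarrow> int \<Rightarrow> 'a::comm_ring_1 B" where
  "gcmd i e s j al be =
     Bvar (X1 0) ^ e * Bvar (X2 0) ^ s * Bvar (Q i (1 - e) (1 - s))
   - Bvar (X1 0) ^ e * Bvar (X2 0) ^ s *
       Bvar (Q j (nat (int (1 - e) + al)) (nat (int (1 - s) + be)))"

text \<open>Action on B of the element (delta1^a x1)^(1-e) (delta2^b x2)^(1-s) delta1^s1 delta2^t of B^e.\<close>
definition actV :: "nat \<Rightarrow> nat \<Rightarrow> nat \<Rightarrow> nat \<Rightarrow> nat \<Rightarrow> nat \<Rightarrow> 'a::comm_ring_1 B \<Rightarrow> 'a B" where
  "actV e s a b s1 t h =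
     Bvar (X1 a) ^ (1 - e) * Bvar (X2 b) ^ (1 - s) * (delta1 ^^ s1) ((delta2 ^^ t) h)"

definition deg1 :: "(var \<Rightarrow>\<^sub>0 nat) \<Rightarrow> nat" where
  "deg1 m = (\<Sum>v\<in>Poly_Mapping.keys m. (case v of X1 i \<Rightarrow> (i + 1) * Poly_Mapping.lookup m v | _ \<Rightarrow> 0))"

definition deg2 :: "(var \<Rightarrow>\<^sub>0 nat) \<Rightarrow> nat" where
  "deg2 m = (\<Sum>v\<in>Poly_Mapping.keys m. (case v of X2 j \<Rightarrow> (j + 1) * Poly_Mapping.lookup m v | _ \<Rightarrow> 0))"

text \<open>Deg, compared lexicographically (Product_Lexorder).\<close>
definition Deg :: "(var \<Rightarrow>\<^sub>0 nat) \<Rightarrow> nat \<times> nat" where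
  "Deg m = (deg1 m, deg2 m)"

text \<open>Sum of the terms of maximal Deg (0 for h = 0).\<close>
definition lead :: "'a::comm_ring_1 B \<Rightarrow> 'a B" where
  "lead h = Poly_Mapping.mapp (\<lambda>m c. if Deg m = Max (Deg ` Poly_Mapping.keys h) then c else 0) h"

definition lin_indep_family :: "'i set \<Rightarrow> ('i \<Rightarrow> 'a::comm_ring_1 B) \<Rightarrow> bool" where
  "lin_indep_family I f \<longleftrightarrow> (\<forall>c :: 'i \<Rightarrow> 'a. finite {k. c k \<noteq> 0} \<longrightarrow> {k. c k \<noteq> 0} \<subseteq> I \<longrightarrow>
      (\<Sum>k\<in>{k. c k \<noteq> 0}. smul (c k) (f k)) = 0 \<longrightarrow> (\<forall>k. c k = 0))"

end

theory Submission
  imports Defs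
begin

text \<open>
  For a monomial x1^e x2^s \<delta>1^p \<delta>2^r q_j with e, s \<in> {0, 1}, its image under \<delta>1^S \<delta>2^T
  has a unique term of maximal Deg: each \<delta>l falls on the variable derived from xl when that is
  present and on the one derived from q_j otherwise.  Hence the leading part of w g(i, e, s) is
  a difference m - m' of two monomials, whose q-variables \<delta>1^a \<delta>2^b q_k record the
  configurations [k, a, b] of M before and after the command fires; m moreover determines the
  command and w.  In a vanishing finite combination, acyclicity of M yields a term whose m is
  the m' of no other term; nothing cancels it, so its coefficient is 0.
\<close>

section \<open>Linear independence of differences of monomials\<close>

lemma lookup_smul: "Poly_Mapping.lookup (smul c p) m = c * Poly_Mapping.lookup p m"
  by (simp add: smul_def map.rep_eq when_def)

lemma lookup_sum_monomial_differences:
  fixes f :: "'i \<Rightarrow> 'a::comm_ring_1 B"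
  assumes f: "\<And>k. k \<in> F \<Longrightarrow> f k = Poly_Mapping.single (src k) 1 - Poly_Mapping.single (tgt k) 1"
    and "finite F" "inj_on src F" "k0 \<in> F" "\<And>k. k \<in> F \<Longrightarrow> tgt k \<noteq> src k0"
  shows "Poly_Mapping.lookup (\<Sum>k\<in>F. smul (c k) (f k)) (src k0) = c k0"
proof -
  have "Poly_Mapping.lookup (\<Sum>k\<in>F. smul (c k) (f k)) (src k0) = (\<Sum>k\<in>F. c k * Poly_Mapping.lookup (f k) (src k0))"
    by (simp add: lookup_sum lookup_smul)
  also have "\<dots> = (\<Sum>k\<in>F. if k = k0 then c k else 0)"
  proof (rule sum.cong[OF refl])
    fix k assume k: "k \<in> F"
    have "src k = src k0 \<longleftrightarrow> k = k0"
      using assms(3,4) k by (auto dest: inj_onD)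
    then show "c k * Poly_Mapping.lookup (f k) (src k0) = (if k = k0 then c k else 0)"
      using assms(5)[OF k] by (simp add: f[OF k] lookup_minus lookup_single when_def)
  qed
  also have "\<dots> = c k0"
    using assms(2,4) by simp
  finally show ?thesis .
qed

lemma lin_indep_family_monomial_differences:
  fixes f :: "'i \<Rightarrow> 'a::comm_ring_1 B"
  assumes f: "\<And>k. k \<in> I \<Longrightarrow> f k = Poly_Mapping.single (src k) 1 - Poly_Mapping.single (tgt k) 1"
    and inj: "inj_on src I"
    and acyclic: "acyclic {(k', k). k' \<in> I \<and> k \<in> I \<and> tgt k' = src k}"
  shows "lin_indep_family I f"
  unfolding lin_indep_family_def
proof (rule allI, intro impI)
  fix c :: "'i \<Rightarrow> 'a"
  define F where "F = {k. c k \<noteq> 0}"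
  assume "finite {k. c k \<noteq> 0}" "{k. c k \<noteq> 0} \<subseteq> I" "(\<Sum>k\<in>{k. c k \<noteq> 0}. smul (c k) (f k)) = 0"
  then have fin: "finite F" and FI: "F \<subseteq> I" and sum: "(\<Sum>k\<in>F. smul (c k) (f k)) = 0"
    by (simp_all add: F_def)
  show "\<forall>k. c k = 0"
  proof (rule ccontr)
    assume "\<not> (\<forall>k. c k = 0)"
    then obtain k1 where "k1 \<in> F"
      by (auto simp: F_def)
    let ?r = "{(k', k). k' \<in> F \<and> k \<in> F \<and> tgt k' = src k}"
    have wf: "wf ?r"
    proof (rule finite_acyclic_wf)
      show "finite ?r"
        by (rule finite_subset[of _ "F \<times> F"]) (use fin in auto)
      show "acyclic ?r"
        by (rule acyclic_subset[OF acyclic]) (use FI in auto)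
    qed
    obtain k0 where k0: "k0 \<in> F" and minimal: "\<And>k. (k, k0) \<in> ?r \<Longrightarrow> k \<notin> F"
      by (rule wfE_min[OF wf \<open>k1 \<in> F\<close>]) blast
    have "c k0 = Poly_Mapping.lookup (\<Sum>k\<in>F. smul (c k) (f k)) (src k0)"
    proof (rule lookup_sum_monomial_differences[symmetric])
      show "tgt k \<noteq> src k0" if "k \<in> F" for k
        using minimal[of k] that k0 by auto
    qed (use f FI fin k0 inj_on_subset[OF inj FI] in auto)
    then show False
      using k0 sum by (simp add: F_def)
  qed
qed

lemma der_add: "der D (p + q) = der D p + der D q"
  unfolding der_def
  by (rule setsum_keys_plus_distrib[where f = "\<lambda>m c. \<Sum>v\<in>Poly_Mapping.keys m.
      Poly_Mapping.single (m - Poly_Mapping.single v 1) (c * of_nat (Poly_Mapping.lookup m v)) * D v"])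
    (simp_all add: distrib_right single_add sum.distrib)

lemma der_diff: "der D (p - q) = der D p - der D q"
  using der_add[of D "p - q" q] by (simp add: algebra_simps)

lemma der_single:
  "der D (Poly_Mapping.single m c) = (\<Sum>v\<in>Poly_Mapping.keys m.
      Poly_Mapping.single (m - Poly_Mapping.single v 1) (c * of_nat (Poly_Mapping.lookup m v)) * D v)"
  by (simp add: der_def)

lemma der_single_superset:
  assumes "finite A" "Poly_Mapping.keys m \<subseteq> A"
  shows "der D (Poly_Mapping.single m c) = (\<Sum>v\<in>A.
      Poly_Mapping.single (m - Poly_Mapping.single v 1) (c * of_nat (Poly_Mapping.lookup m v)) * D v)"
  unfolding der_single
  by (rule sum.mono_neutral_left) (use assms in \<open>auto simp: in_keys_iff\<close>)

lemma keys_der: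
  "Poly_Mapping.keys (der D p) \<subseteq>
     (\<Union>m\<in>Poly_Mapping.keys p. Poly_Mapping.keys (der D (Poly_Mapping.single m (Poly_Mapping.lookup p m))))"
proof -
  have "der D p = (\<Sum>m\<in>Poly_Mapping.keys p. der D (Poly_Mapping.single m (Poly_Mapping.lookup p m)))"
    unfolding der_single by (simp add: der_def)
  then show ?thesis
    by (simp only: keys_sum)
qed

lemma delta1_add: "delta1 (p + q) = delta1 p + delta1 q"
  by (simp add: delta1_def der_add)

lemma delta2_add: "delta2 (p + q) = delta2 p + delta2 q"
  by (simp add: delta2_def der_add)

lemma funpow_delta1_diff: "(delta1 ^^ n) (p - q) = (delta1 ^^ n) p - (delta1 ^^ n) q"
  by (induction n) (simp_all add: delta1_def der_diff)

lemma funpow_delta2_diff: "(delta2 ^^ n) (p - q) = (delta2 ^^ n) p - (delta2 ^^ n) q"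
  by (induction n) (simp_all add: delta2_def der_diff)

lemma single_times_Bvar:
  "Poly_Mapping.single m c * Bvar v = Poly_Mapping.single (m + Poly_Mapping.single v 1) c"
  by (simp add: Bvar_def mult_single)

section \<open>Derivatives of the monomials occurring in g\<close>

definition xq_mon :: "nat \<Rightarrow> nat \<Rightarrow> nat \<Rightarrow> nat \<Rightarrow> nat \<Rightarrow> nat \<Rightarrow> nat \<Rightarrow> var \<Rightarrow>\<^sub>0 nat" where
  "xq_mon e s k l i p r =
     Poly_Mapping.single (X1 k) e + Poly_Mapping.single (X2 l) s + Poly_Mapping.single (Q i p r) 1"

lemma keys_xq_mon: "Poly_Mapping.keys (xq_mon e s k l i p r) \<subseteq> {X1 k, X2 l, Q i p r}"
  by (auto simp: xq_mon_def in_keys_iff lookup_add lookup_single when_def split: if_splits)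

lemma lookup_xq_mon [simp]:
  "Poly_Mapping.lookup (xq_mon e s k l i p r) (X1 k) = e"
  "Poly_Mapping.lookup (xq_mon e s k l i p r) (X2 l) = s"
  "Poly_Mapping.lookup (xq_mon e s k l i p r) (Q i p r) = 1"
  by (simp_all add: xq_mon_def lookup_add lookup_single)

lemma xq_mon_shift:
  "xq_mon 1 s k l i p r - Poly_Mapping.single (X1 k) 1 + Poly_Mapping.single (X1 (Suc k)) 1 = xq_mon 1 s (Suc k) l i p r"
  "xq_mon e 1 k l i p r - Poly_Mapping.single (X2 l) 1 + Poly_Mapping.single (X2 (Suc l)) 1 = xq_mon e 1 k (Suc l) i p r"
  "xq_mon e s k l i p r - Poly_Mapping.single (Q i p r) 1 + Poly_Mapping.single (Q i (Suc p) r) 1 = xq_mon e s k l i (Suc p) r"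
  "xq_mon e s k l i p r - Poly_Mapping.single (Q i p r) 1 + Poly_Mapping.single (Q i p (Suc r)) 1 = xq_mon e s k l i p (Suc r)"
  by (rule poly_mapping_eqI; simp add: xq_mon_def lookup_add lookup_minus lookup_single when_def)+

lemma delta1_xq_mon:
  assumes "e \<le> 1"
  shows "delta1 (Poly_Mapping.single (xq_mon e s k l i p r) c) =
    (if e = 1 then Poly_Mapping.single (xq_mon e s (Suc k) l i p r) c else 0)
    + Poly_Mapping.single (xq_mon e s k l i (Suc p) r) c"
proof -
  have "delta1 (Poly_Mapping.single (xq_mon e s k l i p r) c) = (\<Sum>v\<in>{X1 k, X2 l, Q i p r}.
      Poly_Mapping.single (xq_mon e s k l i p r - Poly_Mapping.single v 1)
        (c * of_nat (Poly_Mapping.lookup (xq_mon e s k l i p r) v)) * d1var v)"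
    unfolding delta1_def by (rule der_single_superset) (use keys_xq_mon in auto)
  then show ?thesis
    using assms xq_mon_shift(1,3) by (cases e) (auto simp: single_times_Bvar)
qed

lemma delta2_xq_mon:
  assumes "s \<le> 1"
  shows "delta2 (Poly_Mapping.single (xq_mon e s k l i p r) c) =
    (if s = 1 then Poly_Mapping.single (xq_mon e s k (Suc l) i p r) c else 0)
    + Poly_Mapping.single (xq_mon e s k l i p (Suc r)) c"
proof -
  have "delta2 (Poly_Mapping.single (xq_mon e s k l i p r) c) = (\<Sum>v\<in>{X1 k, X2 l, Q i p r}.
      Poly_Mapping.single (xq_mon e s k l i p r - Poly_Mapping.single v 1)
        (c * of_nat (Poly_Mapping.lookup (xq_mon e s k l i p r) v)) * d2var v)"
    unfolding delta2_def by (rule der_single_superset) (use keys_xq_mon in auto)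
  then show ?thesis
    using assms xq_mon_shift(2,4) by (cases s) (auto simp: single_times_Bvar)
qed

lemma funpow_leading_term:
  fixes d :: "('m \<Rightarrow>\<^sub>0 'b::comm_monoid_add) \<Rightarrow> 'm \<Rightarrow>\<^sub>0 'b"
  assumes add: "\<And>p q. d (p + q) = d p + d q"
    and leading: "\<And>k. \<exists>R. d (t k) = t (Suc k) + R \<and> Poly_Mapping.keys R \<subseteq> L (Suc k)"
    and lower: "\<And>k R. Poly_Mapping.keys R \<subseteq> L k \<Longrightarrow> Poly_Mapping.keys (d R) \<subseteq> L (Suc k)"
    and R\<^sub>0: "Poly_Mapping.keys R\<^sub>0 \<subseteq> L 0"
  shows "\<exists>R. (d ^^ n) (t 0 + R\<^sub>0) = t n + R \<and> Poly_Mapping.keys R \<subseteq> L n"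
proof (induction n)
  case 0
  show ?case using R\<^sub>0 by auto
next
  case (Suc n)
  then obtain R where R: "(d ^^ n) (t 0 + R\<^sub>0) = t n + R" "Poly_Mapping.keys R \<subseteq> L n"
    by blast
  obtain R' where R': "d (t n) = t (Suc n) + R'" "Poly_Mapping.keys R' \<subseteq> L (Suc n)"
    using leading by blast
  have "(d ^^ Suc n) (t 0 + R\<^sub>0) = t (Suc n) + (R' + d R)"
    by (simp add: R(1) R'(1) add add.assoc)
  moreover have "Poly_Mapping.keys (R' + d R) \<subseteq> L (Suc n)"
    using keys_add[of R' "d R"] R'(2) lower[OF R(2)] by blast
  ultimately show ?case by blast
qed

text \<open>For e, s \<le> 1 the Deg of xq_mon e s k l i p r is (e (k + 1), s (l + 1)), so lower_mons e s K T
  consists of the monomials of this shape whose Deg is below that of xq_mon e s K T i p r.\<close>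

definition lower_mons :: "nat \<Rightarrow> nat \<Rightarrow> nat \<Rightarrow> nat \<Rightarrow> (var \<Rightarrow>\<^sub>0 nat) set" where
  "lower_mons e s K T = {xq_mon e s k l i p r | k l i p r. (e * k, s * l) < (e * K, s * T)}"

lemma xq_mon_in_lower_mons: "(e * k, s * l) < (e * K, s * T) \<Longrightarrow> xq_mon e s k l i p r \<in> lower_mons e s K T"
  unfolding lower_mons_def by blast

lemma delta1_lower_mons:
  assumes "e \<le> 1" and R: "Poly_Mapping.keys R \<subseteq> lower_mons e s K T"
  shows "Poly_Mapping.keys (delta1 R) \<subseteq> lower_mons e s (Suc K) T"
proof -
  have "Poly_Mapping.keys (delta1 (Poly_Mapping.single m c)) \<subseteq> lower_mons e s (Suc K) T"
    if "m \<in> lower_mons e s K T" for m c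
  proof -
    from that obtain k l i p r where m: "m = xq_mon e s k l i p r" and lt: "(e * k, s * l) < (e * K, s * T)"
      by (auto simp: lower_mons_def)
    have "(e * k, s * l) < (e * Suc K, s * T)" "e = 1 \<Longrightarrow> (e * Suc k, s * l) < (e * Suc K, s * T)"
      using lt assms(1) by (auto simp: less_prod_def le_Suc_eq)
    then show ?thesis
      unfolding m delta1_xq_mon[OF assms(1)]
      using keys_add by (fastforce intro: xq_mon_in_lower_mons split: if_splits)
  qed
  then show ?thesis
    using keys_der[of d1var R] R unfolding delta1_def by blast
qed

lemma delta2_lower_mons:
  assumes "s \<le> 1" and R: "Poly_Mapping.keys R \<subseteq> lower_mons e s K T"
  shows "Poly_Mapping.keys (delta2 R) \<subseteq> lower_mons e s K (Suc T)"
proof -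
  have "Poly_Mapping.keys (delta2 (Poly_Mapping.single m c)) \<subseteq> lower_mons e s K (Suc T)"
    if "m \<in> lower_mons e s K T" for m c
  proof -
    from that obtain k l i p r where m: "m = xq_mon e s k l i p r" and lt: "(e * k, s * l) < (e * K, s * T)"
      by (auto simp: lower_mons_def)
    have "(e * k, s * l) < (e * K, s * Suc T)" "s = 1 \<Longrightarrow> (e * k, s * Suc l) < (e * K, s * Suc T)"
      using lt assms(1) by (auto simp: less_prod_def le_Suc_eq)
    then show ?thesis
      unfolding m delta2_xq_mon[OF assms(1)]
      using keys_add by (fastforce intro: xq_mon_in_lower_mons split: if_splits)
  qed
  then show ?thesis
    using keys_der[of d2var R] R unfolding delta2_def by blast
qed

lemma delta1_leading_step:
  assumes "e \<le> 1"
  shows "\<exists>R. delta1 (Poly_Mapping.single (xq_mon e s K T i (p + (1 - e) * K) r) 1) =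
      Poly_Mapping.single (xq_mon e s (Suc K) T i (p + (1 - e) * Suc K) r) 1 + R
    \<and> Poly_Mapping.keys R \<subseteq> lower_mons e s (Suc K) T"
proof (cases "e = 1")
  case True
  then show ?thesis
    by (intro exI[of _ "Poly_Mapping.single (xq_mon e s K T i (Suc p) r) 1"])
      (auto simp: delta1_xq_mon less_prod_def intro: xq_mon_in_lower_mons)
next
  case False
  then have "e = 0" using assms by simp
  then show ?thesis
    using delta1_xq_mon[of 0 s K T i "p + K" r 1] by (intro exI[of _ 0]) (simp add: xq_mon_def)
qed

lemma delta2_leading_step:
  assumes "s \<le> 1"
  shows "\<exists>R. delta2 (Poly_Mapping.single (xq_mon e s K T i p (r + (1 - s) * T)) 1) =
      Poly_Mapping.single (xq_mon e s K (Suc T) i p (r + (1 - s) * Suc T)) 1 + R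
    \<and> Poly_Mapping.keys R \<subseteq> lower_mons e s K (Suc T)"
proof (cases "s = 1")
  case True
  then show ?thesis
    by (intro exI[of _ "Poly_Mapping.single (xq_mon e s K T i p (Suc r)) 1"])
      (auto simp: delta2_xq_mon less_prod_def intro: xq_mon_in_lower_mons)
next
  case False
  then have "s = 0" using assms by simp
  then show ?thesis
    using delta2_xq_mon[of 0 e K T i p "r + T" 1] by (intro exI[of _ 0]) (simp add: xq_mon_def)
qed

lemma delta1_delta2_xq_mon:
  assumes "e \<le> 1" "s \<le> 1"
  obtains R where
    "(delta1 ^^ S) ((delta2 ^^ T) (Poly_Mapping.single (xq_mon e s 0 0 i p r) 1)) =
       (Poly_Mapping.single (xq_mon e s S T i (p + (1 - e) * S) (r + (1 - s) * T)) 1 + R :: 'a::comm_ring_1 B)"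
    "Poly_Mapping.keys R \<subseteq> lower_mons e s S T"
proof -
  obtain R2 :: "'a B" where R2:
    "(delta2 ^^ T) (Poly_Mapping.single (xq_mon e s 0 0 i p r) 1 + 0) =
       Poly_Mapping.single (xq_mon e s 0 T i p (r + (1 - s) * T)) 1 + R2"
    "Poly_Mapping.keys R2 \<subseteq> lower_mons e s 0 T"
    using funpow_leading_term[where t = "\<lambda>T. Poly_Mapping.single (xq_mon e s 0 T i p (r + (1 - s) * T)) 1"
        and L = "lower_mons e s 0" and R\<^sub>0 = 0 and n = T,
        OF delta2_add delta2_leading_step[OF assms(2)] delta2_lower_mons[OF assms(2)]]
    by auto
  obtain R :: "'a B" where R:
    "(delta1 ^^ S) (Poly_Mapping.single (xq_mon e s 0 T i (p + (1 - e) * 0) (r + (1 - s) * T)) 1 + R2) =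
       Poly_Mapping.single (xq_mon e s S T i (p + (1 - e) * S) (r + (1 - s) * T)) 1 + R"
    "Poly_Mapping.keys R \<subseteq> lower_mons e s S T"
    using funpow_leading_term[where t = "\<lambda>S. Poly_Mapping.single (xq_mon e s S T i (p + (1 - e) * S) (r + (1 - s) * T)) 1"
        and L = "\<lambda>S. lower_mons e s S T" and R\<^sub>0 = R2 and n = S,
        OF delta1_add delta1_leading_step[OF assms(1)] delta1_lower_mons[OF assms(1)] R2(2)]
    by auto
  show thesis
    by (rule that[of R]) (use R R2(1) in simp_all)
qed

section \<open>Degrees and leading parts\<close>

lemma deg1_add: "deg1 (m + m') = deg1 m + deg1 m'"
  unfolding deg1_def
  by (rule setsum_keys_plus_distrib[where f = "\<lambda>v k. case v of X1 i \<Rightarrow> (i + 1) * k | _ \<Rightarrow> 0"])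
    (simp_all add: algebra_simps split: var.split)

lemma deg2_add: "deg2 (m + m') = deg2 m + deg2 m'"
  unfolding deg2_def
  by (rule setsum_keys_plus_distrib[where f = "\<lambda>v k. case v of X2 j \<Rightarrow> (j + 1) * k | _ \<Rightarrow> 0"])
    (simp_all add: algebra_simps split: var.split)

lemma deg1_single: "deg1 (Poly_Mapping.single v k) = (case v of X1 i \<Rightarrow> (i + 1) * k | _ \<Rightarrow> 0)"
  by (cases "k = 0") (simp_all add: deg1_def split: var.split)

lemma deg2_single: "deg2 (Poly_Mapping.single v k) = (case v of X2 j \<Rightarrow> (j + 1) * k | _ \<Rightarrow> 0)"
  by (cases "k = 0") (simp_all add: deg2_def split: var.split)

definition vmon :: "nat \<Rightarrow> nat \<Rightarrow> nat \<Rightarrow> nat \<Rightarrow> var \<Rightarrow>\<^sub>0 nat" where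
  "vmon e s a b = Poly_Mapping.single (X1 a) (1 - e) + Poly_Mapping.single (X2 b) (1 - s)"

lemma Deg_vmon_xq_mon:
  "Deg (vmon e s a b + xq_mon e s k l i p r) = ((1 - e) * (a + 1) + e * (k + 1), (1 - s) * (b + 1) + s * (l + 1))"
  by (simp add: Deg_def vmon_def xq_mon_def deg1_add deg2_add deg1_single deg2_single)

lemma lookup_vmon_xq_mon:
  "Poly_Mapping.lookup (vmon e s a b + xq_mon e s k l i p r) (X1 x) = ((1 - e) when a = x) + (e when k = x)"
  "Poly_Mapping.lookup (vmon e s a b + xq_mon e s k l i p r) (X2 x) = ((1 - s) when b = x) + (s when l = x)"
  by (simp_all add: vmon_def xq_mon_def lookup_add lookup_single)

lemma keys_monomial_times: "Poly_Mapping.keys (Poly_Mapping.single w 1 * R) \<subseteq> (+) w ` Poly_Mapping.keys R"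
  using keys_mult[of "Poly_Mapping.single w 1" R] by (auto split: if_splits)

lemma Deg_less_if_lower_mons:
  assumes "e \<le> 1" "s \<le> 1" "Poly_Mapping.keys (R :: 'a::comm_ring_1 B) \<subseteq> lower_mons e s S T"
    and "m \<in> Poly_Mapping.keys (Poly_Mapping.single (vmon e s a b) 1 * R)"
  shows "Deg m < Deg (vmon e s a b + xq_mon e s S T j p r)"
proof -
  obtain m' where "m = vmon e s a b + m'" "m' \<in> lower_mons e s S T"
    using assms(3,4) keys_monomial_times[of "vmon e s a b" R] by blast
  then obtain k l i p' r' where m: "m = vmon e s a b + xq_mon e s k l i p' r'" and lt: "(e * k, s * l) < (e * S, s * T)"
    unfolding lower_mons_def by blast
  have "e = 0 \<or> e = 1" "s = 0 \<or> s = 1"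
    using assms(1,2) by auto
  then show ?thesis
    using lt by (auto simp: m Deg_vmon_xq_mon less_prod_def)
qed

lemma lead_monomial_difference:
  fixes R :: "'a::comm_ring_1 B"
  assumes "m1 \<noteq> m2" "Deg m1 = Deg m2" and lower: "\<And>m. m \<in> Poly_Mapping.keys R \<Longrightarrow> Deg m < Deg m1"
  shows "lead (Poly_Mapping.single m1 1 - Poly_Mapping.single m2 1 + R) = Poly_Mapping.single m1 1 - Poly_Mapping.single m2 1"
proof (cases "(1::'a) = 0")
  case True
  have "x = 0" for x :: "'a B"
    by (rule poly_mapping_eqI) (metis True lookup_zero mult.right_neutral mult_zero_right)
  then show ?thesis by metis
next
  case False
  define P where "P = Poly_Mapping.single m1 1 - Poly_Mapping.single m2 1 + R"
  have lookup_top: "Poly_Mapping.lookup P m = (1 when m1 = m) - (1 when m2 = m)" if "Deg m = Deg m1" for m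
    using lower that by (fastforce simp: P_def lookup_add lookup_minus lookup_single in_keys_iff)
  have m1: "m1 \<in> Poly_Mapping.keys P"
    using lookup_top[of m1] assms(1) False by (simp add: in_keys_iff)
  have keys_P: "Poly_Mapping.keys P \<subseteq> {m1, m2} \<union> Poly_Mapping.keys R"
    unfolding P_def using keys_add[of "Poly_Mapping.single m1 1 - Poly_Mapping.single m2 1" R]
      keys_diff[of "Poly_Mapping.single m1 (1::'a)" "Poly_Mapping.single m2 1"] by (auto split: if_splits)
  have max: "Max (Deg ` Poly_Mapping.keys P) = Deg m1"
  proof (rule Max_eqI)
    show "d \<le> Deg m1" if "d \<in> Deg ` Poly_Mapping.keys P" for d
      using that keys_P lower assms(2) by (force intro: less_imp_le)
    show "Deg m1 \<in> Deg ` Poly_Mapping.keys P"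
      using m1 by blast
  qed simp
  show ?thesis
    unfolding P_def[symmetric]
  proof (rule poly_mapping_eqI)
    fix m
    show "Poly_Mapping.lookup (lead P) m = Poly_Mapping.lookup (Poly_Mapping.single m1 1 - Poly_Mapping.single m2 1) m"
      using lookup_top[of m] assms(2)
      by (cases "Deg m = Deg m1") (auto simp: lead_def lookup_mapp max lookup_minus lookup_single in_keys_iff when_def)
  qed
qed

section \<open>Configurations of the machine\<close>

lemma Bvar_power: "(Bvar v :: 'a::comm_ring_1 B) ^ k = Poly_Mapping.single (Poly_Mapping.single v k) 1"
  by (induction k) (simp_all add: Bvar_def mult_single flip: single_add)

lemma gcmd_eq:
  "(gcmd i e s j al be :: 'a::comm_ring_1 B) =
     Poly_Mapping.single (xq_mon e s 0 0 i (1 - e) (1 - s)) 1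
   - Poly_Mapping.single (xq_mon e s 0 0 j (nat (int (1 - e) + al)) (nat (int (1 - s) + be))) 1"
  unfolding gcmd_def Bvar_power by (simp add: Bvar_def mult_single xq_mon_def)

lemma actV_eq:
  "actV e s a b S T h = Poly_Mapping.single (vmon e s a b) 1 * (delta1 ^^ S) ((delta2 ^^ T) h)"
  by (simp add: actV_def Bvar_power mult_single vmon_def)

type_synonym cmd_index = "(nat \<times> nat \<times> nat) \<times> (nat \<times> nat \<times> nat \<times> nat)"

text \<open>An index k = ((i, e, s), (a, b, S, T)) stands for the command q_i e s \<rightarrow> \<dots> together with
  w = (\<delta>1^a x1)^(1-e) (\<delta>2^b x2)^(1-s) \<delta>1^S \<delta>2^T.  The monomial mon_at k (j, p, r) carries
  the q-variable \<delta>1^p \<delta>2^r q_j, read as the configuration [j, p, r]; the command of k applies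
  in source_conf k (head of tape 1 on cell 0 iff e = 1) and leads to target_conf cmd k.\<close>

definition mon_at :: "cmd_index \<Rightarrow> nat \<times> nat \<times> nat \<Rightarrow> var \<Rightarrow>\<^sub>0 nat" where
  "mon_at = (\<lambda>((_, e, s), (a, b, S, T)) (j, p, r). vmon e s a b + xq_mon e s S T j p r)"

definition source_conf :: "cmd_index \<Rightarrow> nat \<times> nat \<times> nat" where
  "source_conf = (\<lambda>((i, e, s), (a, b, S, T)). (i, (1 - e) + (1 - e) * S, (1 - s) + (1 - s) * T))"

definition target_conf ::
    "(nat \<Rightarrow> nat \<Rightarrow> nat \<Rightarrow> (nat \<times> int \<times> int) option) \<Rightarrow> cmd_index \<Rightarrow> nat \<times> nat \<times> nat" where
  "target_conf cmd = (\<lambda>((i, e, s), (a, b, S, T)). case cmd i e s of Some (j, al, be) \<Rightarrow>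
      (j, nat (int (1 - e) + al) + (1 - e) * S, nat (int (1 - s) + be) + (1 - s) * T))"

lemma mon_at_eq_imp_conf_eq: "mon_at k c = mon_at k' c' \<Longrightarrow> c = c'"
proof -
  obtain j p r where c: "c = (j, p, r)" by (cases c) auto
  assume "mon_at k c = mon_at k' c'"
  then have "Poly_Mapping.lookup (mon_at k c) (Q j p r) = Poly_Mapping.lookup (mon_at k' c') (Q j p r)"
    by simp
  then show "c = c'"
    by (auto simp: c mon_at_def vmon_def xq_mon_def lookup_add lookup_single when_def split: prod.splits if_splits)
qed

lemma minsky_wf_command_flags: "minsky_wf n cmd \<Longrightarrow> cmd i e s = Some c \<Longrightarrow> e \<le> 1 \<and> s \<le> 1"
  unfolding minsky_wf_def by (cases c) blast

lemma minsky_step_source_target: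
  assumes "minsky_wf n cmd" "cmd i e s \<noteq> None"
  shows "(source_conf ((i, e, s), (a, b, S, T)), target_conf cmd ((i, e, s), (a, b, S, T))) \<in> minsky_step cmd"
proof -
  obtain j al be where c: "cmd i e s = Some (j, al, be)"
    using assms(2) by auto
  have w: "e \<le> 1" "s \<le> 1" "al \<in> {-1, 0, 1}" "be \<in> {-1, 0, 1}" "e = 1 \<longrightarrow> al \<ge> 0" "s = 1 \<longrightarrow> be \<ge> 0"
    using assms(1) c unfolding minsky_wf_def by blast+
  then have "(if (1 - e) + (1 - e) * S = 0 then 1 else 0) = e" "(if (1 - s) + (1 - s) * T = 0 then 1 else 0) = s"
    "int (nat (int (1 - e) + al) + (1 - e) * S) = int ((1 - e) + (1 - e) * S) + al"
    "int (nat (int (1 - s) + be) + (1 - s) * T) = int ((1 - s) + (1 - s) * T) + be"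
    by (auto simp: le_Suc_eq)
  then show ?thesis
    using c by (auto simp: minsky_step_def source_conf_def target_conf_def)
qed

lemma source_ne_target:
  assumes "minsky_wf n cmd" "minsky_acyclic cmd" "cmd i e s \<noteq> None"
  shows "source_conf ((i, e, s), (a, b, S, T)) \<noteq> target_conf cmd ((i, e, s), (a, b, S, T))"
  using minsky_step_source_target[OF assms(1,3), of a b S T] assms(2) unfolding minsky_acyclic_def
  by (metis r_into_trancl)

lemma lead_actV_gcmd:
  fixes i e s a b S T :: nat
  defines "k \<equiv> ((i, e, s), (a, b, S, T))"
  assumes wf: "minsky_wf n cmd" and acyclic: "minsky_acyclic cmd" and c: "cmd i e s = Some (j, al, be)"
  shows "lead (actV e s a b S T (gcmd i e s j al be) :: 'a::comm_ring_1 B) =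
    Poly_Mapping.single (mon_at k (source_conf k)) 1 - Poly_Mapping.single (mon_at k (target_conf cmd k)) 1"
proof -
  have es: "e \<le> 1" "s \<le> 1"
    using wf c unfolding minsky_wf_def by blast+
  define W where "W = vmon e s a b"
  obtain R1 :: "'a B" where R1:
    "(delta1 ^^ S) ((delta2 ^^ T) (Poly_Mapping.single (xq_mon e s 0 0 i (1 - e) (1 - s)) 1)) =
       Poly_Mapping.single (xq_mon e s S T i ((1 - e) + (1 - e) * S) ((1 - s) + (1 - s) * T)) 1 + R1"
    "Poly_Mapping.keys R1 \<subseteq> lower_mons e s S T"
    by (rule delta1_delta2_xq_mon[OF es])
  obtain R2 :: "'a B" where R2:
    "(delta1 ^^ S) ((delta2 ^^ T) (Poly_Mapping.single (xq_mon e s 0 0 j (nat (int (1 - e) + al)) (nat (int (1 - s) + be))) 1)) =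
       Poly_Mapping.single (xq_mon e s S T j (nat (int (1 - e) + al) + (1 - e) * S) (nat (int (1 - s) + be) + (1 - s) * T)) 1 + R2"
    "Poly_Mapping.keys R2 \<subseteq> lower_mons e s S T"
    by (rule delta1_delta2_xq_mon[OF es])
  have "actV e s a b S T (gcmd i e s j al be) = Poly_Mapping.single W 1 *
     ((Poly_Mapping.single (xq_mon e s S T i ((1 - e) + (1 - e) * S) ((1 - s) + (1 - s) * T)) 1 + R1) -
      (Poly_Mapping.single (xq_mon e s S T j (nat (int (1 - e) + al) + (1 - e) * S) (nat (int (1 - s) + be) + (1 - s) * T)) 1 + R2))"
    by (simp only: actV_eq gcmd_eq funpow_delta1_diff funpow_delta2_diff R1(1) R2(1) W_def)
  also have "\<dots> =
     Poly_Mapping.single (mon_at k (source_conf k)) 1 - Poly_Mapping.single (mon_at k (target_conf cmd k)) 1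
     + (Poly_Mapping.single W 1 * R1 - Poly_Mapping.single W 1 * R2)"
    by (simp add: algebra_simps mult_single W_def k_def c mon_at_def source_conf_def target_conf_def)
  also have "lead \<dots> = Poly_Mapping.single (mon_at k (source_conf k)) 1 - Poly_Mapping.single (mon_at k (target_conf cmd k)) 1"
  proof (rule lead_monomial_difference)
    show "mon_at k (source_conf k) \<noteq> mon_at k (target_conf cmd k)"
      using source_ne_target[OF wf acyclic] c mon_at_eq_imp_conf_eq k_def by blast
    show "Deg (mon_at k (source_conf k)) = Deg (mon_at k (target_conf cmd k))"
      by (simp add: k_def c mon_at_def source_conf_def target_conf_def Deg_vmon_xq_mon)
    show "Deg m < Deg (mon_at k (source_conf k))"
      if "m \<in> Poly_Mapping.keys (Poly_Mapping.single W 1 * R1 - Poly_Mapping.single W 1 * R2)" for m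
      using that keys_diff Deg_less_if_lower_mons[OF es R1(2)] Deg_less_if_lower_mons[OF es R2(2)]
      by (fastforce simp: W_def k_def mon_at_def source_conf_def)
  qed
  finally show ?thesis .
qed

lemma inj_on_source_mon:
  "inj_on (\<lambda>k. mon_at k (source_conf k))
     {((i, e, s), (a, b, S, T)). e \<le> 1 \<and> s \<le> 1 \<and> (e = 1 \<longrightarrow> a = 0) \<and> (s = 1 \<longrightarrow> b = 0)}"
proof (rule inj_onI)
  fix k k'
  assume "k \<in> {((i, e, s), (a, b, S, T)). e \<le> 1 \<and> s \<le> 1 \<and> (e = 1 \<longrightarrow> a = 0) \<and> (s = 1 \<longrightarrow> b = 0)}"
    and "k' \<in> {((i, e, s), (a, b, S, T)). e \<le> 1 \<and> s \<le> 1 \<and> (e = 1 \<longrightarrow> a = 0) \<and> (s = 1 \<longrightarrow> b = 0)}"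
    and eq: "mon_at k (source_conf k) = mon_at k' (source_conf k')"
  then obtain i e s a b S T i' e' s' a' b' S' T' where
    k: "k = ((i, e, s), (a, b, S, T))" and k': "k' = ((i', e', s'), (a', b', S', T'))"
    and es: "e \<le> 1" "s \<le> 1" "e' \<le> 1" "s' \<le> 1"
    and ab: "e = 1 \<longrightarrow> a = 0" "s = 1 \<longrightarrow> b = 0" "e' = 1 \<longrightarrow> a' = 0" "s' = 1 \<longrightarrow> b' = 0"
    by auto
  have "source_conf k = source_conf k'"
    using mon_at_eq_imp_conf_eq[OF eq] .
  then have conf: "i = i'" "e = e'" "s = s'" "e = 0 \<Longrightarrow> S = S'" "s = 0 \<Longrightarrow> T = T'"
    using es by (auto simp: k k' source_conf_def le_Suc_eq)
  have "Poly_Mapping.lookup (vmon e s a b + xq_mon e s S T i ((1 - e) + (1 - e) * S) ((1 - s) + (1 - s) * T)) v =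
      Poly_Mapping.lookup (vmon e s a' b' + xq_mon e s S' T' i ((1 - e) + (1 - e) * S') ((1 - s) + (1 - s) * T')) v"
    for v
    using eq conf by (simp add: k k' mon_at_def source_conf_def)
  note lookup_eq = this
  have X1: "((1 - e) when a = x) + (e when S = x) = ((1 - e) when a' = x) + (e when S' = x)" for x
    using lookup_eq[of "X1 x"] by (simp only: lookup_vmon_xq_mon)
  have X2: "((1 - s) when b = x) + (s when T = x) = ((1 - s) when b' = x) + (s when T' = x)" for x
    using lookup_eq[of "X2 x"] by (simp only: lookup_vmon_xq_mon)
  have "a = a' \<and> S = S'"
  proof (cases "e = 0")
    case True
    then show ?thesis using X1[of a] conf(4) by (simp add: when_def split: if_splits)
  next
    case False
    then have "e = 1" using es by simp
    then show ?thesis using X1[of S] ab conf(2) by (simp add: when_def split: if_splits)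
  qed
  moreover have "b = b' \<and> T = T'"
  proof (cases "s = 0")
    case True
    then show ?thesis using X2[of b] conf(5) by (simp add: when_def split: if_splits)
  next
    case False
    then have "s = 1" using es by simp
    then show ?thesis using X2[of T] ab conf(3) by (simp add: when_def split: if_splits)
  qed
  ultimately show "k = k'"
    using conf by (simp add: k k')
qed

lemma acyclic_inv_image:
  assumes "acyclic r"
  shows "acyclic (inv_image r h)"
proof -
  have "(h x, h y) \<in> r\<^sup>+" if "(x, y) \<in> (inv_image r h)\<^sup>+" for x y
    using that by induction (auto intro: trancl_into_trancl)
  then show ?thesis
    using assms unfolding acyclic_def by blast
qed

lemma acyclic_monomial_graph:
  assumes "minsky_wf n cmd" "minsky_acyclic cmd" and I: "I \<subseteq> {((i, e, s), x). cmd i e s \<noteq> None}"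
  shows "acyclic {(k', k). k' \<in> I \<and> k \<in> I \<and> mon_at k' (target_conf cmd k') = mon_at k (source_conf k)}"
proof (rule acyclic_subset)
  show "acyclic (inv_image (minsky_step cmd) source_conf)"
    using assms(2) by (intro acyclic_inv_image) (simp add: acyclic_def minsky_acyclic_def)
  show "{(k', k). k' \<in> I \<and> k \<in> I \<and> mon_at k' (target_conf cmd k') = mon_at k (source_conf k)}
      \<subseteq> inv_image (minsky_step cmd) source_conf"
  proof (rule subrelI)
    fix k' k
    assume "(k', k) \<in> {(k', k). k' \<in> I \<and> k \<in> I \<and> mon_at k' (target_conf cmd k') = mon_at k (source_conf k)}"
    then have k': "k' \<in> I" and eq: "mon_at k' (target_conf cmd k') = mon_at k (source_conf k)"
      by simp_all
    obtain i e s a b S T where k'_eq: "k' = ((i, e, s), (a, b, S, T))"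
      by (metis prod.exhaust)
    then have "cmd i e s \<noteq> None"
      using k' I by auto
    then show "(k', k) \<in> inv_image (minsky_step cmd) source_conf"
      using minsky_step_source_target[OF assms(1), of i e s a b S T] mon_at_eq_imp_conf_eq[OF eq] k'_eq by simp
  qed
qed

theorem lemma6:
  fixes n :: nat
    and cmd :: "nat \<Rightarrow> nat \<Rightarrow> nat \<Rightarrow> (nat \<times> int \<times> int) option"
  assumes "minsky_wf n cmd"
    and "minsky_acyclic cmd"
  shows "lin_indep_family
     {((i, e, s), (a, b, s1, t)). cmd i e s \<noteq> None \<and> (e = 1 \<longrightarrow> a = 0) \<and> (s = 1 \<longrightarrow> b = 0)}
     (\<lambda>((i, e, s), (a, b, s1, t)).
        case cmd i e s of Some (j, al, be) \<Rightarrow>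
          (lead (actV e s a b s1 t (gcmd i e s j al be)) :: 'a::comm_ring_1 B))"
    (is "lin_indep_family ?I ?f")
proof (rule lin_indep_family_monomial_differences)
  show "?f k = Poly_Mapping.single (mon_at k (source_conf k)) 1 - Poly_Mapping.single (mon_at k (target_conf cmd k)) 1"
    if "k \<in> ?I" for k
  proof -
    obtain i e s a b S T where k: "k = ((i, e, s), (a, b, S, T))"
      by (metis prod.exhaust)
    with that obtain j al be where c: "cmd i e s = Some (j, al, be)"
      by auto
    then show ?thesis
      using lead_actV_gcmd[OF assms c] by (simp add: k)
  qed
  show "inj_on (\<lambda>k. mon_at k (source_conf k)) ?I"
    by (rule inj_on_subset[OF inj_on_source_mon]) (auto dest: minsky_wf_command_flags[OF assms(1)])
  show "acyclic {(k', k). k' \<in> ?I \<and> k \<in> ?I \<and> mon_at k' (target_conf cmd k') = mon_at k (source_conf k)}"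
    by (rule acyclic_monomial_graph[OF assms]) auto
qed

end
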